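(* Let $a>0$, $c>0$, and consider the four-dimensional system in the variables $x,y,z,b$ $$\dot x=x(1-y+cx-axz),\qquad \dot y=y(-1+x),\qquad \dot z=z(-b+ax^2),\qquad \dot b=0,$$ considered for $b>0$. If $f=f(x,y,z,b)$ is a formal first integral of this system, then $f$ is an arbitrary formal power series in the variable $b$ alone.
   Context: A formal first integral of this system is a formal power series $f\in\mathbb{C}[[x,y,z,b]]$ annihilated by the vector field $x(1-y+cx-axz)\partial_x+y(-1+x)\partial_y+z(-b+ax^2)\partial_z$ (with $\dot b=0$). *)

theory Defs
  imports Complex_Main
begin

text \<open>Formal power series in four variables x, y, z, b over the complex numbers,
  represented by their coefficient function: f (i,j,k,l) is the coefficient of
  x^i y^j z^k b^l.\<close>

type_synonym mps4 = "nat \<times> nat \<times> nat \<times> nat \<Rightarrow> complex"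

definition mps_const :: "complex \<Rightarrow> mps4" where
  "mps_const c = (\<lambda>(i,j,k,l). if i = 0 \<and> j = 0 \<and> k = 0 \<and> l = 0 then c else 0)"

definition mps_X :: mps4 where
  "mps_X = (\<lambda>(i,j,k,l). if i = 1 \<and> j = 0 \<and> k = 0 \<and> l = 0 then 1 else 0)"

definition mps_Y :: mps4 where
  "mps_Y = (\<lambda>(i,j,k,l). if i = 0 \<and> j = 1 \<and> k = 0 \<and> l = 0 then 1 else 0)"

definition mps_Z :: mps4 where
  "mps_Z = (\<lambda>(i,j,k,l). if i = 0 \<and> j = 0 \<and> k = 1 \<and> l = 0 then 1 else 0)"

definition mps_B :: mps4 where
  "mps_B = (\<lambda>(i,j,k,l). if i = 0 \<and> j = 0 \<and> k = 0 \<and> l = 1 then 1 else 0)"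

definition mps_add :: "mps4 \<Rightarrow> mps4 \<Rightarrow> mps4" where
  "mps_add f g = (\<lambda>n. f n + g n)"

definition mps_smult :: "complex \<Rightarrow> mps4 \<Rightarrow> mps4" where
  "mps_smult c f = (\<lambda>n. c * f n)"

definition mps_mult :: "mps4 \<Rightarrow> mps4 \<Rightarrow> mps4" where
  "mps_mult f g = (\<lambda>(i,j,k,l).
     \<Sum>i'\<le>i. \<Sum>j'\<le>j. \<Sum>k'\<le>k. \<Sum>l'\<le>l.
       f (i',j',k',l') * g (i - i', j - j', k - k', l - l'))"

definition mps_dx :: "mps4 \<Rightarrow> mps4" where
  "mps_dx f = (\<lambda>(i,j,k,l). of_nat (i + 1) * f (i + 1, j, k, l))"

definition mps_dy :: "mps4 \<Rightarrow> mps4" where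
  "mps_dy f = (\<lambda>(i,j,k,l). of_nat (j + 1) * f (i, j + 1, k, l))"

definition mps_dz :: "mps4 \<Rightarrow> mps4" where
  "mps_dz f = (\<lambda>(i,j,k,l). of_nat (k + 1) * f (i, j, k + 1, l))"

definition vf_apply :: "complex \<Rightarrow> complex \<Rightarrow> mps4 \<Rightarrow> mps4" where
  "vf_apply a c f =
     mps_add
       (mps_add
         (mps_mult
            (mps_mult mps_X
               (mps_add (mps_add (mps_add (mps_const 1) (mps_smult (-1) mps_Y))
                                 (mps_smult c mps_X))
                        (mps_smult (- a) (mps_mult mps_X mps_Z))))
            (mps_dx f))
         (mps_mult (mps_mult mps_Y (mps_add (mps_const (-1)) mps_X)) (mps_dy f)))
       (mps_mult (mps_mult mps_Z (mps_add (mps_smult (-1) mps_B)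
                                          (mps_smult a (mps_mult mps_X mps_X))))
                 (mps_dz f))"

definition formal_first_integral :: "complex \<Rightarrow> complex \<Rightarrow> mps4 \<Rightarrow> bool" where
  "formal_first_integral a c f \<longleftrightarrow> vf_apply a c f = (\<lambda>_. 0)"

definition series_in_b_only :: "mps4 \<Rightarrow> bool" where
  "series_in_b_only f \<longleftrightarrow> (\<forall>i j k l. (i \<noteq> 0 \<or> j \<noteq> 0 \<or> k \<noteq> 0) \<longrightarrow> f (i,j,k,l) = 0)"

end

theory Submission
  imports Defs
begin

text \<open>The linear part of the vector field is x d/dx - y d/dy, which multiplies the monomial
  x^i y^j z^k b^l by i - j, while all other terms raise the total degree. Comparing coefficients,
  (i - j) f(i,j,k,l) is a combination of coefficients of lower total degree, so by induction
  on the degree every non-resonant coefficient (i \<noteq> j) off the b-axis vanishes. A resonant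
  coefficient f(j,j,k,l) with k > 0 is caught by the coefficient of x^j y^j z^k b^(l+1), to which
  -b z d/dz contributes -k f(j,j,k,l); for k = 0 and j > 0 the equations at the exponents
  (j+1,j), (j,j+1) and (j+1,j+1) combine to c j f(j,j,0,l) = 0. Conversely, every term of
  the field annihilates series in b alone.\<close>

definition mps_monom :: "nat \<Rightarrow> nat \<Rightarrow> nat \<Rightarrow> nat \<Rightarrow> mps4" where
  "mps_monom p q r s = (\<lambda>(i,j,k,l). if i = p \<and> j = q \<and> k = r \<and> l = s then 1 else 0)"

lemma mps_mult_monom_left:
  "mps_mult (mps_monom p q r s) g (i,j,k,l) =
    (if p \<le> i \<and> q \<le> j \<and> r \<le> k \<and> s \<le> l then g (i-p, j-q, k-r, l-s) else 0)"
proof -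
  have nest_conj: "(if A \<and> B then x else 0) = (if A then if B then x else 0 else (0::complex))"
    for A B x by simp
  have sum_if_const: "(\<Sum>x\<in>S. if P then h x else 0) = (if P then sum h S else (0::complex))"
    for S P h by simp
  show ?thesis
    unfolding mps_mult_def mps_monom_def
    by (simp add: if_distrib[of "\<lambda>x. x * _"] nest_conj sum_if_const cong: if_cong)
qed

lemma mps_mult_monom_monom:
  "mps_mult (mps_monom p q r s) (mps_monom p' q' r' s') =
   mps_monom (p + p') (q + q') (r + r') (s + s')"
  by (rule ext, clarify, simp add: mps_mult_monom_left, auto simp: mps_monom_def)

lemma mps_mult_add_left: "mps_mult (mps_add f g) h = mps_add (mps_mult f h) (mps_mult g h)"
  unfolding mps_mult_def mps_add_def by (auto simp: algebra_simps sum.distrib)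

lemma mps_mult_add_right: "mps_mult h (mps_add f g) = mps_add (mps_mult h f) (mps_mult h g)"
  unfolding mps_mult_def mps_add_def by (auto simp: algebra_simps sum.distrib)

lemma mps_mult_smult_left: "mps_mult (mps_smult c f) h = mps_smult c (mps_mult f h)"
  unfolding mps_mult_def mps_smult_def by (auto simp: algebra_simps sum_distrib_left)

lemma mps_mult_smult_right: "mps_mult h (mps_smult c f) = mps_smult c (mps_mult h f)"
  unfolding mps_mult_def mps_smult_def by (auto simp: algebra_simps sum_distrib_left)

lemma mps_X_eq_monom: "mps_X = mps_monom 1 0 0 0"
  unfolding mps_X_def mps_monom_def by simp

lemma mps_Y_eq_monom: "mps_Y = mps_monom 0 1 0 0"
  unfolding mps_Y_def mps_monom_def by simp

lemma mps_Z_eq_monom: "mps_Z = mps_monom 0 0 1 0"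
  unfolding mps_Z_def mps_monom_def by simp

lemma mps_B_eq_monom: "mps_B = mps_monom 0 0 0 1"
  unfolding mps_B_def mps_monom_def by simp

lemma mps_const_eq_smult_monom: "mps_const c = mps_smult c (mps_monom 0 0 0 0)"
  unfolding mps_const_def mps_smult_def mps_monom_def by auto

lemma vf_apply_coeff:
  "vf_apply a c f (i,j,k,l) =
     (of_nat i - of_nat j) * f (i,j,k,l)
   - (if j > 0 then of_nat i * f (i,j-1,k,l) else 0)
   + (if i > 0 then (c * of_nat (i-1) + of_nat j) * f (i-1,j,k,l) else 0)
   - (if i > 0 \<and> k > 0 then a * of_nat (i-1) * f (i-1,j,k-1,l) else 0)
   + (if i > 1 then a * of_nat k * f (i-2,j,k,l) else 0)
   - (if l > 0 then of_nat k * f (i,j,k,l-1) else 0)"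
proof -
  have i_cases: "P" if "i = 0 \<Longrightarrow> P" "i = 1 \<Longrightarrow> P" "\<And>m. i = Suc (Suc m) \<Longrightarrow> P" for P
    using that by (metis One_nat_def not0_implies_Suc)
  show ?thesis
    unfolding vf_apply_def mps_X_eq_monom mps_Y_eq_monom mps_Z_eq_monom mps_B_eq_monom
      mps_const_eq_smult_monom
    apply (simp only: mps_mult_add_left mps_mult_add_right mps_mult_smult_left
        mps_mult_smult_right mps_mult_monom_monom)
    apply (simp add: mps_add_def mps_smult_def mps_mult_monom_left mps_dx_def mps_dy_def mps_dz_def)
    apply (rule i_cases; cases j; cases k; cases l)
    apply (simp_all add: algebra_simps)
    done
qed

lemma formal_first_integral_coeff:
  "formal_first_integral a c f \<Longrightarrow> vf_apply a c f (i,j,k,l) = 0"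
  unfolding formal_first_integral_def by simp

lemma series_in_b_only_imp_formal_first_integral:
  assumes "series_in_b_only f"
  shows "formal_first_integral a c f"
proof -
  have "vf_apply a c f (i,j,k,l) = 0" for i j k l
    using assms unfolding vf_apply_coeff series_in_b_only_def
    by (cases "i = 0"; cases "j = 0"; cases "k = 0") (auto simp: less_Suc_eq)
  then show ?thesis
    unfolding formal_first_integral_def by (intro ext) (metis prod_cases4)
qed

lemma first_integral_nonresonant_coeff_eq_0:
  assumes E: "formal_first_integral a c f"
    and low: "\<And>i j k l. i + j + k + l < n \<Longrightarrow> i \<noteq> 0 \<or> j \<noteq> 0 \<or> k \<noteq> 0 \<Longrightarrow> f (i,j,k,l) = 0"
    and deg: "i + j + k + l = n" and "i \<noteq> j"
  shows "f (i,j,k,l) = 0"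
proof -
  \<comment> \<open>Each lower coefficient that may lie on the b-axis carries a vanishing weight.\<close>
  have "(if j > 0 then of_nat i * f (i,j-1,k,l) else 0) = 0"
    using low[of i "j-1" k l] deg by (cases "i = 0") auto
  moreover have "(if i > 0 then (c * of_nat (i-1) + of_nat j) * f (i-1,j,k,l) else 0) = 0"
    using low[of "i-1" j k l] deg by (cases "i = 1 \<and> j = 0 \<and> k = 0") auto
  moreover have "(if i > 0 \<and> k > 0 then a * of_nat (i-1) * f (i-1,j,k-1,l) else 0) = 0"
    using low[of "i-1" j "k-1" l] deg by (cases "i = 1") auto
  moreover have "(if i > 1 then a * of_nat k * f (i-2,j,k,l) else 0) = 0"
    using low[of "i-2" j k l] deg by (cases "k = 0") auto
  moreover have "(if l > 0 then of_nat k * f (i,j,k,l-1) else 0) = 0"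
    using low[of i j k "l-1"] deg by (cases "k = 0") auto
  ultimately have "(of_nat i - of_nat j) * f (i,j,k,l) = 0"
    using formal_first_integral_coeff[OF E, of i j k l] unfolding vf_apply_coeff by simp
  with \<open>i \<noteq> j\<close> show ?thesis by simp
qed

lemma first_integral_resonant_z_coeff_eq_0:
  assumes E: "formal_first_integral a c f"
    and low: "\<And>i j k l. i + j + k + l < n \<Longrightarrow> i \<noteq> 0 \<or> j \<noteq> 0 \<or> k \<noteq> 0 \<Longrightarrow> f (i,j,k,l) = 0"
    and deg: "j + j + k + l = n" and "k > 0"
  shows "f (j,j,k,l) = 0"
proof -
  have nonres: "f (i',j',k',l') = 0" if "i' + j' + k' + l' = n" "i' \<noteq> j'" for i' j' k' l'
    using first_integral_nonresonant_coeff_eq_0[OF E low that] .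
  have "(if j > 0 then of_nat j * f (j,j-1,k,l+1) else 0) = 0"
    using nonres[of j "j-1" k "l+1"] deg by (cases "j = 0") auto
  moreover have "(if j > 0 then (c * of_nat (j-1) + of_nat j) * f (j-1,j,k,l+1) else 0) = 0"
    using nonres[of "j-1" j k "l+1"] deg by (cases "j = 0") auto
  moreover have "(if j > 0 \<and> k > 0 then a * of_nat (j-1) * f (j-1,j,k-1,l+1) else 0) = 0"
    using low[of "j-1" j "k-1" "l+1"] deg \<open>k > 0\<close> by (cases "j = 1") auto
  moreover have "(if j > 1 then a * of_nat k * f (j-2,j,k,l+1) else 0) = 0"
    using low[of "j-2" j k "l+1"] deg \<open>k > 0\<close> by auto
  ultimately have "of_nat k * f (j,j,k,l) = 0"
    using formal_first_integral_coeff[OF E, of j j k "l+1"] unfolding vf_apply_coeff by simp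
  with \<open>k > 0\<close> show ?thesis by simp
qed

lemma first_integral_resonant_z_free_coeff_eq_0:
  assumes E: "formal_first_integral a c f" and "c \<noteq> 0"
    and low: "\<And>i j k l. i + j + k + l < n \<Longrightarrow> i \<noteq> 0 \<or> j \<noteq> 0 \<or> k \<noteq> 0 \<Longrightarrow> f (i,j,k,l) = 0"
    and deg: "j + j + l = n" and "j > 0"
  shows "f (j,j,0,l) = 0"
proof -
  have nonres: "f (i',j',k',l') = 0" if "i' + j' + k' + l' = n" "i' \<noteq> j'" for i' j' k' l'
    using first_integral_nonresonant_coeff_eq_0[OF E low that] .
  note coeff = formal_first_integral_coeff[OF E, unfolded vf_apply_coeff]
  have "f (j+1,j-1,0,l) = 0" "f (j-1,j+1,0,l) = 0"
    using nonres[of "j+1" "j-1" 0 l] nonres[of "j-1" "j+1" 0 l] deg \<open>j > 0\<close> by auto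
  then have eq_x: "f (j+1,j,0,l) + (c * of_nat j + of_nat j) * f (j,j,0,l) = 0"
    and eq_y: "- f (j,j+1,0,l) - of_nat j * f (j,j,0,l) = 0"
    using coeff[of "j+1" j 0 l] coeff[of j "j+1" 0 l] \<open>j > 0\<close> by (simp_all split: if_splits)
  have eq_xy: "- (of_nat j + 1) * f (j+1,j,0,l) + (c * of_nat j + of_nat j + 1) * f (j,j+1,0,l) = 0"
    using coeff[of "j+1" "j+1" 0 l] by (simp add: algebra_simps split: if_splits)
  have f_x_succ: "f (j+1,j,0,l) = - (c * of_nat j + of_nat j) * f (j,j,0,l)"
    using eq_x by (simp add: algebra_simps eq_neg_iff_add_eq_0)
  have f_y_succ: "f (j,j+1,0,l) = - of_nat j * f (j,j,0,l)"
    using eq_y by (simp add: algebra_simps eq_neg_iff_add_eq_0) (metis add.right_inverse)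
  have "of_nat j * c * f (j,j,0,l) = 0"
    using eq_xy unfolding f_x_succ f_y_succ by (simp add: algebra_simps)
  with \<open>c \<noteq> 0\<close> \<open>j > 0\<close> show ?thesis by simp
qed

lemma formal_first_integral_imp_series_in_b_only:
  assumes E: "formal_first_integral a c f" and "c \<noteq> 0"
  shows "series_in_b_only f"
proof -
  have "\<forall>i j k l. i + j + k + l = n \<longrightarrow> (i \<noteq> 0 \<or> j \<noteq> 0 \<or> k \<noteq> 0) \<longrightarrow> f (i,j,k,l) = 0" for n
  proof (induction n rule: less_induct)
    case (less n)
    then have low: "f (i,j,k,l) = 0" if "i + j + k + l < n" "i \<noteq> 0 \<or> j \<noteq> 0 \<or> k \<noteq> 0"
      for i j k l using that by blast
    show ?case
    proof (intro allI impI)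
      fix i j k l assume deg: "i + j + k + l = n" and off_axis: "i \<noteq> 0 \<or> j \<noteq> 0 \<or> k \<noteq> 0"
      consider "i \<noteq> j" | "i = j" "k > 0" | "i = j" "k = 0" "j > 0"
        using off_axis by auto
      then show "f (i,j,k,l) = 0"
      proof cases
        case 1
        then show ?thesis using first_integral_nonresonant_coeff_eq_0[OF E low] deg by blast
      next
        case 2
        then show ?thesis using first_integral_resonant_z_coeff_eq_0[OF E low] deg by blast
      next
        case 3
        then show ?thesis
          using first_integral_resonant_z_free_coeff_eq_0[OF E \<open>c \<noteq> 0\<close> low] deg by simp
      qed
    qed
  qed
  then show ?thesis
    unfolding series_in_b_only_def by blast
qed

lemma formal_first_integral_iff_series_in_b_only:
  "c \<noteq> 0 \<Longrightarrow> formal_first_integral a c f \<longleftrightarrow> series_in_b_only f"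
  using formal_first_integral_imp_series_in_b_only series_in_b_only_imp_formal_first_integral
  by blast

theorem theorem1p7:
  fixes a c :: real and f :: mps4
  assumes "a > 0" and "c > 0"
  shows "formal_first_integral (complex_of_real a) (complex_of_real c) f
         \<longleftrightarrow> series_in_b_only f"
  using assms(2) by (intro formal_first_integral_iff_series_in_b_only) simp

end
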